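(* Let $K$ be an algebraically closed field of characteristic $p>0$, $p\neq 2$, and $n\geq 4$. Let $G_\psi\subset\mathrm{Aut}_0K[x_1,\ldots,x_n]$ be the subgroup generated by $\mathrm{GL}_n(K)$ and the automorphism $\psi: x_1\mapsto x_1+x_2x_3$, $x_k\mapsto x_k$ ($k\neq 1$). Then $G_\psi$ contains: (i) for each $i=1,\ldots,n$, the automorphism $\psi_i: x_i\mapsto x_i+x_{i+1}x_{i+2}$, $x_k\mapsto x_k$ ($k\neq i$), with indices taken cyclically modulo $n$; and (ii) every automorphism $\varphi_{i,j,k,\beta}: x_i\mapsto x_i+\beta x_j^k$, $x_l\mapsto x_l$ ($l\neq i$), where $k\geq 1$, $\beta\in K$, $i,j\in\{1,\ldots,n\}$, $j\neq i$.
   Context: $\mathrm{Aut}_0 K[x_1,\ldots,x_n]$ is the group of origin-preserving $K$-algebra automorphisms of $K[x_1,\ldots,x_n]$; $\mathrm{GL}_n(K)$ is its subgroup of linear automorphisms $x_i\mapsto\sum_j a_{ij}x_j$. *)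

theory Defs
  imports "HOL-Library.Poly_Mapping" "HOL-Computational_Algebra.Polynomial"
begin

text \<open>The ring K[x_1,...,x_n] is modelled by the polynomials using only x_0..x_(n-1).\<close>

type_synonym 'a mpoly = "(nat \<Rightarrow>\<^sub>0 nat) \<Rightarrow>\<^sub>0 'a"

definition mVar :: "nat \<Rightarrow> 'a::comm_ring_1 mpoly" where
  "mVar i = Poly_Mapping.single (Poly_Mapping.single i 1) 1"

definition mConst :: "'a::comm_ring_1 \<Rightarrow> 'a mpoly" where
  "mConst c = Poly_Mapping.single 0 c"

definition in_vars :: "nat \<Rightarrow> 'a::comm_ring_1 mpoly \<Rightarrow> bool" where
  "in_vars n p \<longleftrightarrow> (\<forall>m\<in>Poly_Mapping.keys p. \<forall>i\<in>Poly_Mapping.keys m. i < n)"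

definition msubst :: "(nat \<Rightarrow> 'a::comm_ring_1 mpoly) \<Rightarrow> 'a mpoly \<Rightarrow> 'a mpoly" where
  "msubst s p = (\<Sum>m\<in>Poly_Mapping.keys p. mConst (Poly_Mapping.lookup p m) * (\<Prod>i\<in>Poly_Mapping.keys m. s i ^ Poly_Mapping.lookup m i))"

text \<open>An endomorphism of K[x_0..x_(n-1)] is given by the images of the variables;
  variables outside the range are fixed (normalisation).\<close>
definition is_endo :: "nat \<Rightarrow> (nat \<Rightarrow> 'a::comm_ring_1 mpoly) \<Rightarrow> bool" where
  "is_endo n s \<longleftrightarrow> (\<forall>i<n. in_vars n (s i)) \<and> (\<forall>i\<ge>n. s i = mVar i)"

text \<open>Composition: (comp s t) corresponds to phi_s \<circ> phi_t.\<close>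
definition mcomp :: "(nat \<Rightarrow> 'a::comm_ring_1 mpoly) \<Rightarrow> (nat \<Rightarrow> 'a mpoly) \<Rightarrow> nat \<Rightarrow> 'a mpoly" where
  "mcomp s t = (\<lambda>i. msubst s (t i))"

definition is_aut :: "nat \<Rightarrow> (nat \<Rightarrow> 'a::comm_ring_1 mpoly) \<Rightarrow> bool" where
  "is_aut n s \<longleftrightarrow> is_endo n s \<and>
     (\<exists>t. is_endo n t \<and> mcomp s t = mVar \<and> mcomp t s = mVar)"

definition is_linear_aut :: "nat \<Rightarrow> (nat \<Rightarrow> 'a::comm_ring_1 mpoly) \<Rightarrow> bool" where
  "is_linear_aut n s \<longleftrightarrow> is_aut n s \<and>
     (\<exists>a::nat \<Rightarrow> nat \<Rightarrow> 'a. \<forall>i<n. s i = (\<Sum>j<n. mConst (a i j) * mVar j))"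

text \<open>psi: x_0 \<mapsto> x_0 + x_1 x_2 (0-based indexing of x_1 \<mapsto> x_1 + x_2 x_3).\<close>
definition psi :: "'a::comm_ring_1 itself \<Rightarrow> nat \<Rightarrow> 'a mpoly" where
  "psi _ = (mVar :: nat \<Rightarrow> 'a mpoly)(0 := mVar 0 + mVar 1 * mVar 2)"

definition psi_i :: "'a::comm_ring_1 itself \<Rightarrow> nat \<Rightarrow> nat \<Rightarrow> nat \<Rightarrow> 'a mpoly" where
  "psi_i _ n i = (mVar :: nat \<Rightarrow> 'a mpoly)(i := mVar i + mVar ((i+1) mod n) * mVar ((i+2) mod n))"

definition phi :: "nat \<Rightarrow> nat \<Rightarrow> nat \<Rightarrow> 'a::comm_ring_1 \<Rightarrow> nat \<Rightarrow> 'a mpoly" where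
  "phi i j k \<beta> = mVar(i := mVar i + mConst \<beta> * mVar j ^ k)"

inductive_set G_psi :: "'a::comm_ring_1 itself \<Rightarrow> nat \<Rightarrow> (nat \<Rightarrow> 'a mpoly) set"
  for T :: "'a itself" and n :: nat where
  ident: "mVar \<in> G_psi T n"
| lin: "is_linear_aut n s \<Longrightarrow> s \<in> G_psi T n"
| gen: "psi T \<in> G_psi T n"
| comp: "s \<in> G_psi T n \<Longrightarrow> t \<in> G_psi T n \<Longrightarrow> mcomp s t \<in> G_psi T n"
| inv: "s \<in> G_psi T n \<Longrightarrow> is_endo n t \<Longrightarrow> mcomp s t = mVar \<Longrightarrow> mcomp t s = mVar
        \<Longrightarrow> t \<in> G_psi T n"

end

theory Submission
  imports Defs "HOL-Combinatorics.Transposition"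
begin

text \<open>
  Conjugating \<open>\<psi>\<close> by permutations of the variables gives every elementary quadratic
  automorphism \<open>x\<^sub>i \<mapsto> x\<^sub>i + c x\<^sub>l x\<^sub>j\<close> (\<open>i, l, j\<close> distinct, \<open>c = \<plusminus>1\<close>); the cyclic
  \<open>\<psi>\<^sub>i\<close> are among them. The commutator of \<open>x\<^sub>l \<mapsto> x\<^sub>l + \<beta> x\<^sub>j\<^sup>k\<close> with
  \<open>x\<^sub>i \<mapsto> x\<^sub>i + x\<^sub>l x\<^sub>j\<close> is \<open>x\<^sub>i \<mapsto> x\<^sub>i + \<beta> x\<^sub>j\<^sup>k\<^sup>+\<^sup>1\<close>, so induction on \<open>k\<close>, starting from
  the linear case \<open>k = 1\<close>, yields all \<open>\<phi>\<^sub>i\<^sub>,\<^sub>j\<^sub>,\<^sub>k\<^sub>,\<^sub>\<beta>\<close>.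
\<close>

definition subst_monom :: "(nat \<Rightarrow> 'a::comm_ring_1 mpoly) \<Rightarrow> (nat \<Rightarrow>\<^sub>0 nat) \<Rightarrow> 'a mpoly" where
  "subst_monom s m = (\<Prod>i\<in>Poly_Mapping.keys m. s i ^ Poly_Mapping.lookup m i)"

lemma subst_monom_superset:
  assumes "finite S" "Poly_Mapping.keys m \<subseteq> S"
  shows "subst_monom s m = (\<Prod>i\<in>S. s i ^ Poly_Mapping.lookup m i)"
  unfolding subst_monom_def using assms by (intro prod.mono_neutral_left) (auto simp: in_keys_iff)

lemma subst_monom_0 [simp]: "subst_monom s 0 = 1"
  by (simp add: subst_monom_def)

lemma subst_monom_add: "subst_monom s (a + b) = subst_monom s a * subst_monom s b"
proof -
  let ?S = "Poly_Mapping.keys a \<union> Poly_Mapping.keys b"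
  have "subst_monom s (a + b) = (\<Prod>i\<in>?S. s i ^ Poly_Mapping.lookup (a + b) i)"
    by (rule subst_monom_superset) (use keys_add[of a b] in auto)
  also have "\<dots> = (\<Prod>i\<in>?S. s i ^ Poly_Mapping.lookup a i) * (\<Prod>i\<in>?S. s i ^ Poly_Mapping.lookup b i)"
    by (simp add: lookup_add power_add prod.distrib)
  also have "\<dots> = subst_monom s a * subst_monom s b"
    by (simp add: subst_monom_superset[symmetric])
  finally show ?thesis .
qed

lemma msubst_eq_sum_subst_monom:
  "msubst s p = (\<Sum>m\<in>Poly_Mapping.keys p. mConst (Poly_Mapping.lookup p m) * subst_monom s m)"
  by (simp add: msubst_def subst_monom_def)

lemma mConst_0 [simp]: "mConst 0 = 0"
  by (simp add: mConst_def)

lemma mConst_1 [simp]: "mConst 1 = 1"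
  by (simp add: mConst_def)

lemma mConst_add: "mConst (a + b) = mConst a + mConst b"
  by (simp add: mConst_def single_add)

lemma mConst_uminus: "mConst (- a) = - mConst a"
  by (simp add: mConst_def single_uminus)

lemma mConst_mult: "mConst (a * b) = mConst a * mConst b"
  by (simp add: mConst_def mult_single)

lemma poly_mapping_eq_sum_single:
  "p = (\<Sum>m\<in>Poly_Mapping.keys p. Poly_Mapping.single m (Poly_Mapping.lookup p m))"
  by (rule poly_mapping_eqI) (simp add: lookup_sum lookup_single when_def in_keys_iff)

lemma msubst_0 [simp]: "msubst s 0 = 0"
  by (simp add: msubst_def)

lemma msubst_add: "msubst s (p + q) = msubst s p + msubst s q"
  unfolding msubst_eq_sum_subst_monom
  by (rule setsum_keys_plus_distrib) (simp_all add: mConst_add distrib_right)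

lemma msubst_sum: "msubst s (sum f A) = (\<Sum>x\<in>A. msubst s (f x))"
  by (induction A rule: infinite_finite_induct) (simp_all add: msubst_add)

lemma msubst_single: "msubst s (Poly_Mapping.single m c) = mConst c * subst_monom s m"
  by (simp add: msubst_eq_sum_subst_monom)

lemma msubst_mult: "msubst s (p * q) = msubst s p * msubst s q"
proof -
  let ?P = "Poly_Mapping.keys p" and ?Q = "Poly_Mapping.keys q"
  have "p * q = (\<Sum>a\<in>?P. Poly_Mapping.single a (Poly_Mapping.lookup p a))
              * (\<Sum>b\<in>?Q. Poly_Mapping.single b (Poly_Mapping.lookup q b))"
    using poly_mapping_eq_sum_single[of p] poly_mapping_eq_sum_single[of q] by simp
  also have "\<dots> = (\<Sum>a\<in>?P. \<Sum>b\<in>?Q.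
                   Poly_Mapping.single (a + b) (Poly_Mapping.lookup p a * Poly_Mapping.lookup q b))"
    by (simp add: sum_product mult_single)
  finally have "msubst s (p * q) = (\<Sum>a\<in>?P. \<Sum>b\<in>?Q.
      (mConst (Poly_Mapping.lookup p a) * subst_monom s a) * (mConst (Poly_Mapping.lookup q b) * subst_monom s b))"
    by (simp add: msubst_sum msubst_single subst_monom_add mConst_mult mult_ac)
  also have "\<dots> = msubst s p * msubst s q"
    by (simp add: msubst_eq_sum_subst_monom sum_product)
  finally show ?thesis .
qed

lemma msubst_mConst [simp]: "msubst s (mConst c) = mConst c"
  by (simp add: mConst_def msubst_single)

lemma msubst_1 [simp]: "msubst s 1 = 1"
  using msubst_mConst[of s 1] by simp

lemma msubst_mVar [simp]: "msubst s (mVar i) = s i"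
  by (simp add: mVar_def msubst_single subst_monom_def)

lemma msubst_uminus: "msubst s (- p) = - msubst s p"
  by (metis add.right_inverse add_eq_0_iff msubst_0 msubst_add)

lemma msubst_diff: "msubst s (p - q) = msubst s p - msubst s q"
  using msubst_add[of s p "- q"] by (simp add: msubst_uminus)

lemma msubst_power: "msubst s (p ^ k) = msubst s p ^ k"
  by (induction k) (simp_all add: msubst_mult)

lemmas msubst_hom_simps = msubst_add msubst_diff msubst_uminus msubst_mult msubst_power mConst_uminus

lemma in_vars_mVar [simp]: "in_vars n (mVar i :: 'a::comm_ring_1 mpoly) \<longleftrightarrow> i < n"
  by (auto simp: in_vars_def mVar_def)

lemma in_vars_mConst [simp]: "in_vars n (mConst c)"
  by (auto simp: in_vars_def mConst_def)

lemma in_vars_1 [simp]: "in_vars n 1"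
  using in_vars_mConst[of n 1] by simp

lemma in_vars_add: "in_vars n p \<Longrightarrow> in_vars n q \<Longrightarrow> in_vars n (p + q)"
  using keys_add[of p q] unfolding in_vars_def by blast

lemma in_vars_mult:
  assumes "in_vars n p" "in_vars n q"
  shows "in_vars n (p * q)"
  unfolding in_vars_def
proof (intro ballI)
  fix m i assume "m \<in> Poly_Mapping.keys (p * q)" and i: "i \<in> Poly_Mapping.keys m"
  then obtain u v where "m = u + v" "u \<in> Poly_Mapping.keys p" "v \<in> Poly_Mapping.keys q"
    using keys_mult by blast
  with i keys_add[of u v] assms show "i < n"
    unfolding in_vars_def by blast
qed

lemma in_vars_power: "in_vars n p \<Longrightarrow> in_vars n (p ^ k)"
  by (induction k) (simp_all add: in_vars_mult)

lemma sum_lessThan_mConst_delta: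
  "(\<Sum>j<n. mConst (if j = t then c else 0) * (mVar j :: 'a::comm_ring_1 mpoly))
     = (if t < n then mConst c * mVar t else 0)"
proof -
  have "(\<Sum>j<n. mConst (if j = t then c else 0) * (mVar j :: 'a mpoly))
      = (\<Sum>j<n. if j = t then mConst c * mVar j else 0)"
    by (rule sum.cong) auto
  then show ?thesis
    by simp
qed

definition var_transpose :: "nat \<Rightarrow> nat \<Rightarrow> nat \<Rightarrow> 'a::comm_ring_1 mpoly" where
  "var_transpose p q = (\<lambda>i. mVar (transpose p q i))"

lemma mcomp_var_transpose_self: "mcomp (var_transpose p q) (var_transpose p q) = mVar"
  by (simp add: mcomp_def var_transpose_def)

lemma is_endo_var_transpose:
  "p < n \<Longrightarrow> q < n \<Longrightarrow> is_endo n (var_transpose p q :: nat \<Rightarrow> 'a::comm_ring_1 mpoly)"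
  by (auto simp: is_endo_def var_transpose_def transpose_def)

lemma transpose_less: "p < n \<Longrightarrow> q < n \<Longrightarrow> x < n \<Longrightarrow> transpose p q x < (n::nat)"
  by (simp add: transpose_def)

lemma distinct_map_transpose: "distinct (map (transpose p q) xs) \<longleftrightarrow> distinct xs"
  by (simp add: distinct_map)

lemma is_linear_aut_var_transpose:
  assumes "p < n" "q < n"
  shows "is_linear_aut n (var_transpose p q :: nat \<Rightarrow> 'a::comm_ring_1 mpoly)"
  unfolding is_linear_aut_def
proof (intro conjI exI allI impI)
  show "is_aut n (var_transpose p q :: nat \<Rightarrow> 'a mpoly)"
    using assms is_endo_var_transpose mcomp_var_transpose_self unfolding is_aut_def by blast
  fix i assume "i < n"
  with assms show "var_transpose p q i
      = (\<Sum>j<n. mConst (if j = transpose p q i then 1 else 0) * (mVar j :: 'a mpoly))"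
    by (simp add: sum_lessThan_mConst_delta var_transpose_def transpose_less)
qed

definition quad_elem :: "nat \<Rightarrow> nat \<Rightarrow> nat \<Rightarrow> 'a::comm_ring_1 \<Rightarrow> nat \<Rightarrow> 'a mpoly" where
  "quad_elem i l j c = mVar(i := mVar i + mConst c * mVar l * mVar j)"

lemma psi_eq_quad_elem: "psi T = quad_elem 0 1 2 1"
  by (simp add: psi_def quad_elem_def)

lemma psi_i_eq_quad_elem: "psi_i T n i = quad_elem i ((i + 1) mod n) ((i + 2) mod n) 1"
  by (simp add: psi_i_def quad_elem_def)

lemma is_endo_quad_elem: "i < n \<Longrightarrow> l < n \<Longrightarrow> j < n \<Longrightarrow> is_endo n (quad_elem i l j c)"
  by (auto simp: is_endo_def quad_elem_def in_vars_add in_vars_mult)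

lemma quad_elem_conj_var_transpose:
  "mcomp (mcomp (var_transpose p q) (quad_elem i l j c)) (var_transpose p q)
     = quad_elem (transpose p q i) (transpose p q l) (transpose p q j) c"
proof (rule ext)
  fix m
  have "transpose p q m = i \<longleftrightarrow> m = transpose p q i"
    by auto
  then show "mcomp (mcomp (var_transpose p q) (quad_elem i l j c)) (var_transpose p q) m
      = quad_elem (transpose p q i) (transpose p q l) (transpose p q j) c m"
    by (simp add: mcomp_def var_transpose_def quad_elem_def msubst_add msubst_mult)
qed

lemma quad_elem_conj_mem:
  assumes "quad_elem i l j c \<in> G_psi T n" "p < n" "q < n"
  shows "quad_elem (transpose p q i) (transpose p q l) (transpose p q j) c \<in> G_psi T n"
proof -
  have "var_transpose p q \<in> G_psi T n"
    using assms by (simp add: G_psi.lin is_linear_aut_var_transpose)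
  then have "mcomp (mcomp (var_transpose p q) (quad_elem i l j c)) (var_transpose p q) \<in> G_psi T n"
    using assms(1) by (blast intro: G_psi.comp)
  then show ?thesis
    by (simp only: quad_elem_conj_var_transpose)
qed

text \<open>Three transpositions carry any triple of distinct indices to any other one; each
  fixes the entries already in place.\<close>

lemma quad_elem_permute_mem:
  assumes mem: "quad_elem i l j c \<in> G_psi T n"
    and ilj: "i < n" "l < n" "j < n" "distinct [i, l, j]"
    and abd: "a < n" "b < n" "d < n" "distinct [a, b, d]"
  shows "quad_elem a b d c \<in> G_psi T n"
proof -
  define l1 j1 where "l1 = transpose i a l" and "j1 = transpose i a j"
  have 1: "quad_elem a l1 j1 c \<in> G_psi T n" "l1 < n" "j1 < n" "distinct [a, l1, j1]"
    using quad_elem_conj_mem[OF mem, of i a] distinct_map_transpose[of i a "[i, l, j]"] ilj abd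
    by (simp_all add: l1_def j1_def transpose_less)
  define j2 where "j2 = transpose l1 b j1"
  have "transpose l1 b a = a"
    using 1 abd by simp
  then have 2: "quad_elem a b j2 c \<in> G_psi T n" "j2 < n" "distinct [a, b, j2]"
    using quad_elem_conj_mem[OF 1(1), of l1 b] distinct_map_transpose[of l1 b "[a, l1, j1]"] 1 abd
    by (simp_all add: j2_def transpose_less)
  have "transpose j2 d a = a" "transpose j2 d b = b"
    using 2 abd by simp_all
  then show ?thesis
    using quad_elem_conj_mem[OF 2(1), of j2 d] 2 abd by simp
qed

lemma quad_elem_mem:
  assumes "3 \<le> n" "a < n" "b < n" "d < n" "distinct [a, b, d]"
  shows "quad_elem a b d 1 \<in> G_psi T n"
proof -
  have "quad_elem 0 1 2 1 \<in> G_psi T n"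
    using G_psi.gen[of T n] by (simp add: psi_eq_quad_elem)
  then show ?thesis
    by (rule quad_elem_permute_mem) (use assms in auto)
qed

lemma mcomp_quad_elem_uminus:
  assumes "i \<noteq> l" "i \<noteq> j"
  shows "mcomp (quad_elem i l j c) (quad_elem i l j (- c)) = mVar"
proof (rule ext)
  fix m show "mcomp (quad_elem i l j c) (quad_elem i l j (- c)) m = mVar m"
    using assms by (cases "m = i") (simp_all add: mcomp_def quad_elem_def msubst_hom_simps)
qed

lemma quad_elem_uminus_mem:
  assumes "quad_elem i l j c \<in> G_psi T n" "i < n" "l < n" "j < n" "i \<noteq> l" "i \<noteq> j"
  shows "quad_elem i l j (- c) \<in> G_psi T n"
  using assms mcomp_quad_elem_uminus[of i l j c] mcomp_quad_elem_uminus[of i l j "- c"]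
  by (intro G_psi.inv[OF assms(1)]) (simp_all add: is_endo_quad_elem)

lemma mcomp_phi_uminus:
  assumes "i \<noteq> j"
  shows "mcomp (phi i j k \<beta>) (phi i j k (- \<beta>)) = (mVar :: nat \<Rightarrow> 'a::comm_ring_1 mpoly)"
proof (rule ext)
  fix m show "mcomp (phi i j k \<beta>) (phi i j k (- \<beta>)) m = (mVar m :: 'a mpoly)"
    using assms by (cases "m = i") (simp_all add: mcomp_def phi_def msubst_hom_simps)
qed

lemma is_endo_phi: "i < n \<Longrightarrow> j < n \<Longrightarrow> is_endo n (phi i j k \<beta>)"
  by (auto simp: is_endo_def phi_def in_vars_add in_vars_mult in_vars_power)

lemma is_linear_aut_phi_1:
  assumes "i < n" "j < n" "i \<noteq> j"
  shows "is_linear_aut n (phi i j 1 (\<beta>::'a::comm_ring_1))"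
  unfolding is_linear_aut_def is_aut_def
proof (intro conjI exI allI impI)
  show "is_endo n (phi i j 1 \<beta>)" "is_endo n (phi i j 1 (- \<beta>))"
    using assms by (simp_all add: is_endo_phi)
  show "mcomp (phi i j 1 \<beta>) (phi i j 1 (- \<beta>)) = mVar"
       "mcomp (phi i j 1 (- \<beta>)) (phi i j 1 \<beta>) = mVar"
    using assms mcomp_phi_uminus[of i j 1 "- \<beta>"] by (simp_all add: mcomp_phi_uminus)
  fix m assume "m < n"
  let ?a = "\<lambda>j'. (if j' = m then 1 else 0) + (if j' = j then (if m = i then \<beta> else 0) else 0)"
  have "(\<Sum>j'<n. mConst (?a j') * mVar j')
      = (\<Sum>j'<n. mConst (if j' = m then 1 else 0) * mVar j')
        + (\<Sum>j'<n. mConst (if j' = j then (if m = i then \<beta> else 0) else 0) * (mVar j' :: 'a mpoly))"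
    by (simp add: mConst_add distrib_right sum.distrib)
  also have "\<dots> = phi i j 1 \<beta> m"
    using assms \<open>m < n\<close> by (simp only: sum_lessThan_mConst_delta) (simp add: phi_def)
  finally show "phi i j 1 \<beta> m = (\<Sum>j'<n. mConst (?a j') * mVar j')"
    by simp
qed

lemma commutator_phi_quad_elem:
  assumes "i \<noteq> l" "i \<noteq> j" "l \<noteq> j"
  shows "mcomp (mcomp (mcomp (phi l j k \<beta>) (quad_elem i l j 1)) (phi l j k (- \<beta>))) (quad_elem i l j (- 1))
     = phi i j (Suc k) (\<beta>::'a::comm_ring_1)"
proof (rule ext)
  fix m
  show "mcomp (mcomp (mcomp (phi l j k \<beta>) (quad_elem i l j 1)) (phi l j k (- \<beta>))) (quad_elem i l j (- 1)) m
      = phi i j (Suc k) \<beta> m"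
  proof (cases "m = i")
    case True
    then show ?thesis
      using assms by (simp add: mcomp_def phi_def quad_elem_def msubst_hom_simps algebra_simps)
  next
    case False
    then show ?thesis
      using assms by (cases "m = l") (simp_all add: mcomp_def phi_def quad_elem_def msubst_hom_simps)
  qed
qed

lemma phi_Suc_mem:
  assumes "3 \<le> n" "i < n" "j < n" "i \<noteq> j"
  shows "phi i j (Suc k) (\<beta>::'a::comm_ring_1) \<in> G_psi T n"
  using assms(2-4)
proof (induction k arbitrary: i j \<beta>)
  case 0
  then show ?case
    using is_linear_aut_phi_1 G_psi.lin by (metis One_nat_def)
next
  case (Suc k)
  have "\<exists>l::nat. l < 3 \<and> l \<noteq> i \<and> l \<noteq> j"
    by presburger
  then obtain l where l: "l < n" "l \<noteq> i" "l \<noteq> j"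
    using assms(1) by (meson less_le_trans)
  have "quad_elem i l j (1::'a) \<in> G_psi T n"
    using Suc.prems l assms(1) by (intro quad_elem_mem) auto
  moreover have "quad_elem i l j (- 1::'a) \<in> G_psi T n"
    using quad_elem_uminus_mem[OF calculation] Suc.prems l by simp
  moreover have "phi l j (Suc k) \<beta> \<in> G_psi T n" "phi l j (Suc k) (- \<beta>) \<in> G_psi T n"
    using Suc.IH Suc.prems l by simp_all
  ultimately have "mcomp (mcomp (mcomp (phi l j (Suc k) \<beta>) (quad_elem i l j 1)) (phi l j (Suc k) (- \<beta>)))
      (quad_elem i l j (- 1)) \<in> G_psi T n"
    by (intro G_psi.comp)
  then show ?case
    using commutator_phi_quad_elem[of i l j "Suc k" \<beta>] Suc.prems l by simp
qed

lemma cyclic_successors_distinct: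
  fixes n i :: nat
  assumes "3 \<le> n" "i < n"
  shows "distinct [i, (i + 1) mod n, (i + 2) mod n]"
proof -
  consider "i + 2 < n" | "i + 2 = n" | "i + 1 = n"
    using assms(2) by linarith
  then show ?thesis
  proof cases
    case 3
    then have "(i + 2) mod n = 1"
      using assms(1) by (simp add: mod_Suc)
    with 3 assms(1) show ?thesis by auto
  qed (use assms in auto)
qed

theorem mainTheorem4:
  fixes n :: nat
  assumes "CHAR('a::alg_closed_field) > 0"
    and "CHAR('a) \<noteq> 2"
    and "n \<ge> 4"
  shows "(\<forall>i<n. psi_i TYPE('a) n i \<in> G_psi TYPE('a) n)
       \<and> (\<forall>i<n. \<forall>j<n. \<forall>k::nat. \<forall>\<beta>::'a. j \<noteq> i \<longrightarrow> k \<ge> 1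
            \<longrightarrow> phi i j k \<beta> \<in> G_psi TYPE('a) n)"
proof (intro conjI allI impI)
  have n: "3 \<le> n"
    using assms(3) by simp
  fix i assume "i < n"
  then show "psi_i TYPE('a) n i \<in> G_psi TYPE('a) n"
    unfolding psi_i_eq_quad_elem
    using n cyclic_successors_distinct by (intro quad_elem_mem) auto
next
  fix i j k :: nat and \<beta> :: 'a
  assume "i < n" "j < n" "j \<noteq> i" "1 \<le> k"
  then show "phi i j k \<beta> \<in> G_psi TYPE('a) n"
    using phi_Suc_mem[of n i j "k - 1" \<beta>] assms(3) by simp
qed

end
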